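(* Let $p=(p_i)_{i\in\mathbb{N}}\in[0,1]^{\mathbb{N}}$ be a cookie environment, and let $\overline{p}_n=\frac1n\sum_{i=1}^n p_i$. Suppose that the limit $\overline{p}=\lim_{n\to\infty}\overline{p}_n$ exists and lies in $(0,1)$, and that there is $K\in\mathbb{R}$ with $|\overline{p}_n-\overline{p}|\le\frac Kn$ for all $n\in\mathbb{N}$. Let $\mu=\frac{\overline{p}}{1-\overline{p}}$. Then there is a constant $c>0$ depending only on $p$ such that for all positive integers $x$ and all $\varepsilon>0$, \[ \Pr\Big[\Big|\frac{U_p(x)}{x}-\mu\Big|>\varepsilon\Big]\le 2\exp\Big(-\frac{c\varepsilon^2}{1+\mu+\varepsilon}x\Big). \]
   Context: For a cookie environment $p$, let $B_1,B_2,\dots$ be independent Bernoulli random variables with $\Pr[B_i=1]=p_i$ ($B_i=1$ is a "success", $B_i=0$ a "failure"). For a positive integer $x$, $U_p(x)=\inf\{k\in\mathbb{N}:\sum_{i=1}^k(1-B_i)=x\}-x$, i.e. the number of successes before the $x$-th failure. *)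

theory Defs
  imports "HOL-Probability.Probability"
begin

text \<open>The probability space of the independent Bernoulli variables B_i (i >= 1):
  an outcome is omega :: nat => bool, with B_i = omega i (True = success).
  The coordinate 0 is an unused dummy coordinate.\<close>
definition cookie_space :: "(nat \<Rightarrow> real) \<Rightarrow> (nat \<Rightarrow> bool) measure" where
  "cookie_space p = (\<Pi>\<^sub>M i\<in>UNIV. measure_pmf (bernoulli_pmf (p i)))"

definition failures :: "(nat \<Rightarrow> bool) \<Rightarrow> nat \<Rightarrow> nat" where
  "failures \<omega> k = card {i \<in> {1..k}. \<not> \<omega> i}"

definition U :: "(nat \<Rightarrow> bool) \<Rightarrow> nat \<Rightarrow> enat" where
  "U \<omega> x = (if \<exists>k. failures \<omega> k = x then enat ((LEAST k. failures \<omega> k = x) - x) else \<infinity>)"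

definition pbar :: "(nat \<Rightarrow> real) \<Rightarrow> nat \<Rightarrow> real" where
  "pbar p n = (\<Sum>i=1..n. p i) / real n"

end

theory Submission imports Defs begin

text \<open>The event \<open>U\<^sub>p(x) \<le> m\<close> is exactly the event that at least \<open>x\<close> of the first \<open>x + m\<close>
  trials fail. The number of failures among \<open>N\<close> trials is a sum of independent
  \<open>[0,1]\<close>-valued variables with mean \<open>N (1 - pb) + O(K)\<close>, so Hoeffding's inequality with
  \<open>N \<approx> (1 + \<mu> \<pm> \<epsilon>) x\<close> bounds both tails by \<open>exp (-c \<epsilon>\<^sup>2 x / (1 + \<mu> + \<epsilon>))\<close> as soon as
  \<open>\<epsilon> x (1 - pb) \<ge> 2 K\<close>, since then the \<open>O(K)\<close> error eats at most half of the deviation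
  \<open>\<epsilon> x (1 - pb)\<close>. For the remaining pairs \<open>(x, \<epsilon>)\<close> the bound exceeds \<open>1\<close> once
  \<open>c \<le> (1 - pb) / (4 K + 1)\<close>.\<close>

lemma prob_space_cookie_space: "prob_space (cookie_space p)"
  unfolding cookie_space_def by (intro prob_space_PiM measure_pmf.prob_space_axioms)

lemma measurable_cookie_space_coord:
  "(\<lambda>\<omega>. \<omega> i) \<in> measurable (cookie_space p) (measure_pmf (bernoulli_pmf (p i)))"
  unfolding cookie_space_def by (rule measurable_component_singleton) simp

lemma distr_cookie_space_coord:
  "distr (cookie_space p) (measure_pmf (bernoulli_pmf (p i))) (\<lambda>\<omega>. \<omega> i) = measure_pmf (bernoulli_pmf (p i))"
  unfolding cookie_space_def
  by (rule distr_PiM_component) (auto intro: measure_pmf.prob_space_axioms)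

lemma indep_vars_cookie_space:
  assumes "finite I" "I \<noteq> {}"
  shows "prob_space.indep_vars (cookie_space p) (\<lambda>i. measure_pmf (bernoulli_pmf (p i))) (\<lambda>i \<omega>. \<omega> i) I"
proof -
  interpret product_prob_space "\<lambda>i. measure_pmf (bernoulli_pmf (p i))" UNIV
    by unfold_locales
  have "distr (cookie_space p) (\<Pi>\<^sub>M i\<in>I. measure_pmf (bernoulli_pmf (p i))) (\<lambda>\<omega>. restrict \<omega> I)
      = (\<Pi>\<^sub>M i\<in>I. measure_pmf (bernoulli_pmf (p i)))"
    unfolding cookie_space_def by (rule distr_PiM_restrict_finite[OF assms(1)]) simp
  then show ?thesis
    by (subst prob_space.indep_vars_iff_distr_eq_PiM[OF prob_space_cookie_space assms(2)
          measurable_cookie_space_coord]) (simp add: distr_cookie_space_coord)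
qed

definition failure_indicator :: "nat \<Rightarrow> (nat \<Rightarrow> bool) \<Rightarrow> real" where
  "failure_indicator i \<omega> = (if \<omega> i then 0 else 1)"

lemma measurable_failure_indicator [measurable]:
  "failure_indicator i \<in> borel_measurable (cookie_space p)"
  using measurable_compose[OF measurable_cookie_space_coord, of "\<lambda>b. if b then 0 else 1 :: real"]
  by (simp add: failure_indicator_def[abs_def])

lemma expectation_failure_indicator:
  assumes "0 \<le> p i" "p i \<le> 1"
  shows "integral\<^sup>L (cookie_space p) (failure_indicator i) = 1 - p i"
proof -
  have "integral\<^sup>L (cookie_space p) (failure_indicator i)
      = integral\<^sup>L (distr (cookie_space p) (measure_pmf (bernoulli_pmf (p i))) (\<lambda>\<omega>. \<omega> i))
          (\<lambda>b. if b then 0 else 1 :: real)"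
    unfolding failure_indicator_def[abs_def] by (subst integral_distr[OF measurable_cookie_space_coord]) auto
  then show ?thesis
    using assms by (simp add: distr_cookie_space_coord)
qed

lemma sum_failure_indicator: "(\<Sum>i=1..N. failure_indicator i \<omega>) = real (failures \<omega> N)"
proof -
  have "(\<Sum>i=1..N. failure_indicator i \<omega>) = (\<Sum>i\<in>{i \<in> {1..N}. \<not> \<omega> i}. 1)"
    unfolding failure_indicator_def by (rule sum.mono_neutral_cong_right) auto
  then show ?thesis by (simp add: failures_def)
qed

lemma measurable_failures [measurable]:
  "(\<lambda>\<omega>. real (failures \<omega> N)) \<in> borel_measurable (cookie_space p)"
  unfolding sum_failure_indicator[symmetric] by measurable

lemma Hoeffding_failures:
  assumes p_range: "\<And>i. i \<ge> 1 \<Longrightarrow> 0 \<le> p i \<and> p i \<le> 1" and "N \<ge> 1" "t \<ge> 0"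
  shows "measure (cookie_space p) {\<omega> \<in> space (cookie_space p).
           real (failures \<omega> N) \<le> (\<Sum>i=1..N. 1 - p i) - t} \<le> exp (-2 * t\<^sup>2 / N)"
    and "measure (cookie_space p) {\<omega> \<in> space (cookie_space p).
           real (failures \<omega> N) \<ge> (\<Sum>i=1..N. 1 - p i) + t} \<le> exp (-2 * t\<^sup>2 / N)"
proof -
  interpret prob_space "cookie_space p"
    by (rule prob_space_cookie_space)
  have mean: "(\<Sum>i=1..N. expectation (failure_indicator i)) = (\<Sum>i=1..N. 1 - p i)"
    using p_range by (intro sum.cong) (auto simp: expectation_failure_indicator)
  interpret Hoeffding_ineq "cookie_space p" "{1..N}" failure_indicator "\<lambda>_. 0" "\<lambda>_. 1"
    "\<Sum>i=1..N. 1 - p i"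
  proof (unfold_locales, unfold mean)
    show "indep_vars (\<lambda>_. borel) failure_indicator {1..N}"
      unfolding failure_indicator_def
      by (rule indep_vars_compose2[OF indep_vars_cookie_space]) (use \<open>N \<ge> 1\<close> in auto)
  qed (auto simp: failure_indicator_def)
  have "(\<Sum>i=1..N. ((1::real) - 0)\<^sup>2) = real N" "(\<Sum>i=1..N. ((1::real) - 0)\<^sup>2) > 0"
    using \<open>N \<ge> 1\<close> by simp_all
  then show "prob {\<omega> \<in> space (cookie_space p).
           real (failures \<omega> N) \<le> (\<Sum>i=1..N. 1 - p i) - t} \<le> exp (-2 * t\<^sup>2 / N)"
    and "prob {\<omega> \<in> space (cookie_space p).
           real (failures \<omega> N) \<ge> (\<Sum>i=1..N. 1 - p i) + t} \<le> exp (-2 * t\<^sup>2 / N)"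
    using Hoeffding_ineq_le[OF \<open>t \<ge> 0\<close>] Hoeffding_ineq_ge[OF \<open>t \<ge> 0\<close>]
    unfolding sum_failure_indicator by simp_all
qed

lemma failures_Suc: "failures \<omega> (Suc k) = failures \<omega> k + (if \<omega> (Suc k) then 0 else 1)"
proof -
  have "{i \<in> {1..Suc k}. \<not> \<omega> i} = {i \<in> {1..k}. \<not> \<omega> i} \<union> (if \<omega> (Suc k) then {} else {Suc k})"
    by (auto simp: le_Suc_eq)
  then show ?thesis by (auto simp: failures_def)
qed

lemma failures_le: "failures \<omega> k \<le> k"
proof -
  have "failures \<omega> k \<le> card {1..k}"
    unfolding failures_def by (rule card_mono) auto
  then show ?thesis by simp
qed

lemma failures_mono: "k \<le> l \<Longrightarrow> failures \<omega> k \<le> failures \<omega> l"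
  unfolding failures_def by (rule card_mono) auto

lemma failures_attains: "x \<le> failures \<omega> k \<Longrightarrow> \<exists>j\<le>k. failures \<omega> j = x"
proof (induction k)
  case 0
  then show ?case by (simp add: failures_def)
next
  case (Suc k)
  show ?case
  proof (cases "x \<le> failures \<omega> k")
    case True
    then show ?thesis using Suc.IH le_Suc_eq by blast
  next
    case False
    with Suc.prems have "failures \<omega> (Suc k) = x" by (auto simp: failures_Suc split: if_splits)
    then show ?thesis by blast
  qed
qed

lemma U_le_enat_iff: "U \<omega> x \<le> enat m \<longleftrightarrow> x \<le> failures \<omega> (x + m)"
proof
  assume U_le: "U \<omega> x \<le> enat m"
  then have ex: "\<exists>k. failures \<omega> k = x"
    by (auto simp: U_def split: if_splits)
  define L where "L = (LEAST k. failures \<omega> k = x)"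
  have L: "failures \<omega> L = x"
    unfolding L_def using ex by (rule LeastI_ex)
  moreover have "x \<le> L"
    using failures_le[of \<omega> L] L by simp
  moreover have "L - x \<le> m"
    using U_le ex by (simp add: U_def L_def)
  ultimately show "x \<le> failures \<omega> (x + m)"
    using failures_mono[of L "x + m" \<omega>] by simp
next
  assume "x \<le> failures \<omega> (x + m)"
  then obtain j where j: "j \<le> x + m" "failures \<omega> j = x"
    using failures_attains by blast
  then have "(LEAST k. failures \<omega> k = x) \<le> j"
    by (intro Least_le)
  then show "U \<omega> x \<le> enat m"
    using j by (auto simp: U_def)
qed

lemma sets_U_le [measurable]:
  "{\<omega> \<in> space (cookie_space p). U \<omega> x \<le> enat m} \<in> sets (cookie_space p)"
  unfolding U_le_enat_iff of_nat_le_iff[where 'a=real, symmetric] by measurable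

lemma sets_U_gt [measurable]:
  "{\<omega> \<in> space (cookie_space p). enat m < U \<omega> x} \<in> sets (cookie_space p)"
proof -
  have "{\<omega> \<in> space (cookie_space p). enat m < U \<omega> x}
      = space (cookie_space p) - {\<omega> \<in> space (cookie_space p). U \<omega> x \<le> enat m}"
    by auto
  then show ?thesis by simp
qed

lemma measure_U_gt_le:
  assumes p_range: "\<And>i. i \<ge> 1 \<Longrightarrow> 0 \<le> p i \<and> p i \<le> 1" and "x \<ge> 1" "0 \<le> t"
    and t_le: "t \<le> (\<Sum>i=1..x+m. 1 - p i) - (real x - 1)"
  shows "measure (cookie_space p) {\<omega> \<in> space (cookie_space p). enat m < U \<omega> x}
           \<le> exp (-2 * t\<^sup>2 / real (x + m))"
proof -
  interpret prob_space "cookie_space p"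
    by (rule prob_space_cookie_space)
  have "{\<omega> \<in> space (cookie_space p). enat m < U \<omega> x}
      \<subseteq> {\<omega> \<in> space (cookie_space p). real (failures \<omega> (x + m)) \<le> (\<Sum>i=1..x+m. 1 - p i) - t}"
    using t_le by (auto simp: not_le[symmetric] U_le_enat_iff)
  then have "prob {\<omega> \<in> space (cookie_space p). enat m < U \<omega> x}
      \<le> prob {\<omega> \<in> space (cookie_space p). real (failures \<omega> (x + m)) \<le> (\<Sum>i=1..x+m. 1 - p i) - t}"
    by (intro finite_measure_mono) measurable
  also have "\<dots> \<le> exp (-2 * t\<^sup>2 / real (x + m))"
    using \<open>x \<ge> 1\<close> \<open>0 \<le> t\<close> by (intro Hoeffding_failures(1) p_range) auto
  finally show ?thesis .
qed

lemma measure_U_le_le: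
  assumes p_range: "\<And>i. i \<ge> 1 \<Longrightarrow> 0 \<le> p i \<and> p i \<le> 1" and "x \<ge> 1" "0 \<le> t"
    and t_le: "t \<le> real x - (\<Sum>i=1..x+m. 1 - p i)"
  shows "measure (cookie_space p) {\<omega> \<in> space (cookie_space p). U \<omega> x \<le> enat m}
           \<le> exp (-2 * t\<^sup>2 / real (x + m))"
proof -
  interpret prob_space "cookie_space p"
    by (rule prob_space_cookie_space)
  have "{\<omega> \<in> space (cookie_space p). U \<omega> x \<le> enat m}
      \<subseteq> {\<omega> \<in> space (cookie_space p). real (failures \<omega> (x + m)) \<ge> (\<Sum>i=1..x+m. 1 - p i) + t}"
    using t_le by (auto simp: U_le_enat_iff)
  then have "prob {\<omega> \<in> space (cookie_space p). U \<omega> x \<le> enat m}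
      \<le> prob {\<omega> \<in> space (cookie_space p). real (failures \<omega> (x + m)) \<ge> (\<Sum>i=1..x+m. 1 - p i) + t}"
    by (intro finite_measure_mono) measurable
  also have "\<dots> \<le> exp (-2 * t\<^sup>2 / real (x + m))"
    using \<open>x \<ge> 1\<close> \<open>0 \<le> t\<close> by (intro Hoeffding_failures(2) p_range) auto
  finally show ?thesis .
qed

lemma enat_deviation_cases:
  fixes u :: enat and x :: nat and \<mu> \<epsilon> :: real
  assumes "0 < x" "0 \<le> \<mu> + \<epsilon>" and dev: "u = \<infinity> \<or> \<bar>real (the_enat u) / x - \<mu>\<bar> > \<epsilon>"
  shows "enat (nat \<lfloor>(\<mu> + \<epsilon>) * x\<rfloor>) < u \<or> (\<epsilon> < \<mu> \<and> u \<le> enat (nat \<lfloor>(\<mu> - \<epsilon>) * x\<rfloor>))"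
proof (cases u)
  case (enat n)
  from dev have "\<mu> + \<epsilon> < real n / x \<or> real n / x < \<mu> - \<epsilon>"
    by (auto simp: enat)
  then show ?thesis
  proof
    assume "\<mu> + \<epsilon> < real n / x"
    then have "(\<mu> + \<epsilon>) * x < real n"
      using \<open>0 < x\<close> by (simp add: less_divide_eq)
    then have "nat \<lfloor>(\<mu> + \<epsilon>) * x\<rfloor> < n"
      using \<open>0 \<le> \<mu> + \<epsilon>\<close> by (simp add: nat_less_iff floor_less_iff)
    then show ?thesis by (simp add: enat)
  next
    assume below: "real n / x < \<mu> - \<epsilon>"
    then have "\<epsilon> < \<mu>"
      using divide_nonneg_nonneg[of "real n" "real x"] by linarith
    moreover have "real n < (\<mu> - \<epsilon>) * x"
      using below \<open>0 < x\<close> by (simp add: divide_less_eq)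
    then have "n \<le> nat \<lfloor>(\<mu> - \<epsilon>) * x\<rfloor>"
      by linarith
    ultimately show ?thesis by (simp add: enat)
  qed
qed simp

lemma Hoeffding_exponent_le:
  fixes t N D \<epsilon> x q c :: real
  assumes "0 < N" "N \<le> D * x" "0 \<le> \<epsilon> * x * q" "\<epsilon> * x * q / 2 \<le> t" "0 < x" "0 \<le> c" "c \<le> q\<^sup>2 / 2"
  shows "exp (-2 * t\<^sup>2 / N) \<le> exp (- (c * \<epsilon>\<^sup>2 / D) * x)"
proof -
  have "0 < D * x"
    using assms(1,2) by linarith
  then have D: "0 < D"
    using \<open>0 < x\<close> zero_less_mult_pos2 by blast
  have "c * \<epsilon>\<^sup>2 / D * x = (c * \<epsilon>\<^sup>2 * x\<^sup>2) / (D * x)"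
    using \<open>0 < x\<close> by (simp add: power2_eq_square)
  also have "\<dots> \<le> (q\<^sup>2 / 2 * \<epsilon>\<^sup>2 * x\<^sup>2) / (D * x)"
    using assms D by (intro divide_right_mono mult_right_mono) auto
  also have "\<dots> = 2 * (\<epsilon> * x * q / 2)\<^sup>2 / (D * x)"
    by (simp add: field_simps power2_eq_square)
  also have "\<dots> \<le> 2 * t\<^sup>2 / (D * x)"
    using assms D by (intro divide_right_mono mult_left_mono power_mono) auto
  also have "\<dots> \<le> 2 * t\<^sup>2 / N"
    using assms by (intro divide_left_mono) auto
  finally show ?thesis by simp
qed

locale cookie_environment_rate =
  fixes p :: "nat \<Rightarrow> real" and pb K :: real
  assumes p_range: "\<And>i. i \<ge> 1 \<Longrightarrow> 0 \<le> p i \<and> p i \<le> 1"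
    and pb_range: "0 < pb" "pb < 1"
    and rate: "\<And>n. n \<ge> 1 \<Longrightarrow> \<bar>pbar p n - pb\<bar> \<le> K / real n"
begin

abbreviation q :: real where "q \<equiv> 1 - pb"

abbreviation \<mu> :: real where "\<mu> \<equiv> pb / (1 - pb)"

lemma q_pos: "0 < q" and q_le_1: "q \<le> 1" and mu_nonneg: "0 \<le> \<mu>"
  using pb_range by simp_all

lemma K_nonneg: "0 \<le> K"
  using rate[of 1] by simp

lemma expected_failures_close:
  assumes "N \<ge> 1"
  shows "\<bar>(\<Sum>i=1..N. 1 - p i) - real N * q\<bar> \<le> K"
proof -
  have "(\<Sum>i=1..N. 1 - p i) - real N * q = - real N * (pbar p N - pb)"
    using assms by (simp add: sum_subtractf pbar_def algebra_simps)
  then have "\<bar>(\<Sum>i=1..N. 1 - p i) - real N * q\<bar> = real N * \<bar>pbar p N - pb\<bar>"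
    by (simp add: abs_mult)
  also have "\<dots> \<le> real N * (K / real N)"
    using rate[OF assms] by (intro mult_left_mono) auto
  finally show ?thesis
    using assms by simp
qed

definition concentration_const :: real where
  "concentration_const = min (q\<^sup>2 / 2) (q / (4 * K + 1))"

lemma concentration_const_pos: "0 < concentration_const"
  using q_pos K_nonneg by (simp add: concentration_const_def)

lemma concentration_const_le: "concentration_const \<le> q\<^sup>2 / 2" "concentration_const \<le> q / (4 * K + 1)"
  unfolding concentration_const_def by (rule min.cobounded1, rule min.cobounded2)

lemma measure_U_above_mean:
  assumes "x \<ge> 1" "0 < \<epsilon>" and large: "2 * K \<le> \<epsilon> * x * q"
  shows "measure (cookie_space p) {\<omega> \<in> space (cookie_space p). enat (nat \<lfloor>(\<mu> + \<epsilon>) * x\<rfloor>) < U \<omega> x}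
           \<le> exp (- (concentration_const * \<epsilon>\<^sup>2 / (1 + \<mu> + \<epsilon>)) * x)"
proof -
  define m where "m = nat \<lfloor>(\<mu> + \<epsilon>) * x\<rfloor>"
  have "0 \<le> \<lfloor>(\<mu> + \<epsilon>) * x\<rfloor>"
    using mu_nonneg \<open>0 < \<epsilon>\<close> by simp
  then have "(\<mu> + \<epsilon>) * x - 1 \<le> m" "m \<le> (\<mu> + \<epsilon>) * x"
    by (simp_all add: m_def)
  moreover have "(1 + \<mu> + \<epsilon>) * x = x + (\<mu> + \<epsilon>) * x"
    by (simp add: algebra_simps)
  ultimately have m: "(1 + \<mu> + \<epsilon>) * x - 1 \<le> real (x + m)" "real (x + m) \<le> (1 + \<mu> + \<epsilon>) * x"
    by simp_all
  define t where "t = (\<Sum>i=1..x+m. 1 - p i) - (real x - 1)"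
  have "x + \<epsilon> * x * q - q = ((1 + \<mu> + \<epsilon>) * x - 1) * q"
    using q_pos by (simp add: field_simps)
  also have "\<dots> \<le> real (x + m) * q"
    using m q_pos by (intro mult_right_mono) auto
  finally have "\<epsilon> * x * q / 2 \<le> t"
    using expected_failures_close[of "x + m"] \<open>x \<ge> 1\<close> large q_le_1 unfolding t_def by linarith
  moreover have "0 \<le> \<epsilon> * x * q"
    using \<open>0 < \<epsilon>\<close> q_pos by simp
  ultimately have "measure (cookie_space p) {\<omega> \<in> space (cookie_space p). enat m < U \<omega> x}
      \<le> exp (-2 * t\<^sup>2 / real (x + m))"
    using \<open>x \<ge> 1\<close> by (intro measure_U_gt_le p_range) (auto simp: t_def)
  also have "\<dots> \<le> exp (- (concentration_const * \<epsilon>\<^sup>2 / (1 + \<mu> + \<epsilon>)) * x)"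
    using \<open>x \<ge> 1\<close> m \<open>\<epsilon> * x * q / 2 \<le> t\<close> \<open>0 \<le> \<epsilon> * x * q\<close> concentration_const_le(1)
      concentration_const_pos
    by (intro Hoeffding_exponent_le) (auto simp: algebra_simps)
  finally show ?thesis
    unfolding m_def .
qed

lemma measure_U_below_mean:
  assumes "x \<ge> 1" "0 < \<epsilon>" "\<epsilon> < \<mu>" and large: "2 * K \<le> \<epsilon> * x * q"
  shows "measure (cookie_space p) {\<omega> \<in> space (cookie_space p). U \<omega> x \<le> enat (nat \<lfloor>(\<mu> - \<epsilon>) * x\<rfloor>)}
           \<le> exp (- (concentration_const * \<epsilon>\<^sup>2 / (1 + \<mu> + \<epsilon>)) * x)"
proof -
  define m where "m = nat \<lfloor>(\<mu> - \<epsilon>) * x\<rfloor>"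
  have "0 \<le> \<lfloor>(\<mu> - \<epsilon>) * x\<rfloor>"
    using \<open>\<epsilon> < \<mu>\<close> by simp
  moreover have "(1 + \<mu> - \<epsilon>) * x = x + (\<mu> - \<epsilon>) * x"
    by (simp add: algebra_simps)
  ultimately have m: "real (x + m) \<le> (1 + \<mu> - \<epsilon>) * x"
    by (simp add: m_def)
  also have "\<dots> \<le> (1 + \<mu> + \<epsilon>) * x"
    using \<open>0 < \<epsilon>\<close> by (intro mult_right_mono) auto
  finally have m_le: "real (x + m) \<le> (1 + \<mu> + \<epsilon>) * x" .
  define t where "t = real x - (\<Sum>i=1..x+m. 1 - p i)"
  have "real (x + m) * q \<le> ((1 + \<mu> - \<epsilon>) * x) * q"
    using m q_pos by (intro mult_right_mono) auto
  also have "\<dots> = x - \<epsilon> * x * q"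
    using q_pos by (simp add: field_simps)
  finally have "\<epsilon> * x * q / 2 \<le> t"
    using expected_failures_close[of "x + m"] \<open>x \<ge> 1\<close> large unfolding t_def by linarith
  moreover have "0 \<le> \<epsilon> * x * q"
    using \<open>0 < \<epsilon>\<close> q_pos by simp
  ultimately have "measure (cookie_space p) {\<omega> \<in> space (cookie_space p). U \<omega> x \<le> enat m}
      \<le> exp (-2 * t\<^sup>2 / real (x + m))"
    using \<open>x \<ge> 1\<close> by (intro measure_U_le_le p_range) (auto simp: t_def)
  also have "\<dots> \<le> exp (- (concentration_const * \<epsilon>\<^sup>2 / (1 + \<mu> + \<epsilon>)) * x)"
    using \<open>x \<ge> 1\<close> m_le \<open>\<epsilon> * x * q / 2 \<le> t\<close> \<open>0 \<le> \<epsilon> * x * q\<close>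
      concentration_const_le(1) concentration_const_pos
    by (intro Hoeffding_exponent_le) (auto simp: algebra_simps)
  finally show ?thesis
    unfolding m_def .
qed

lemma concentration_bound_trivial:
  fixes x :: nat and \<epsilon> :: real
  assumes "0 < \<epsilon>" and small: "\<epsilon> * x * q < 2 * K"
  shows "1 \<le> 2 * exp (- (concentration_const * \<epsilon>\<^sup>2 / (1 + \<mu> + \<epsilon>)) * x)"
proof -
  let ?c = concentration_const
  have "?c * \<epsilon>\<^sup>2 / (1 + \<mu> + \<epsilon>) * x = (?c * \<epsilon> * x) * (\<epsilon> / (1 + \<mu> + \<epsilon>))"
    by (simp add: power2_eq_square)
  also have "\<dots> \<le> ?c * \<epsilon> * x"
    using concentration_const_pos \<open>0 < \<epsilon>\<close> mu_nonneg by (intro mult_left_le) auto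
  also have "\<dots> \<le> q / (4 * K + 1) * \<epsilon> * x"
    using concentration_const_le(2) \<open>0 < \<epsilon>\<close> by (intro mult_right_mono) auto
  also have "\<dots> = \<epsilon> * x * q / (4 * K + 1)"
    by simp
  also have "\<dots> \<le> 2 * K / (4 * K + 1)"
    using small K_nonneg by (intro divide_right_mono) auto
  also have "\<dots> \<le> 1 / 2"
    using K_nonneg by (simp add: field_simps)
  finally show ?thesis
    using exp_ge_add_one_self[of "- (?c * \<epsilon>\<^sup>2 / (1 + \<mu> + \<epsilon>)) * x"] by simp
qed

lemma U_concentration:
  assumes "x \<ge> 1" "0 < \<epsilon>"
  shows "measure (cookie_space p) {\<omega> \<in> space (cookie_space p).
           U \<omega> x = \<infinity> \<or> \<bar>real (the_enat (U \<omega> x)) / real x - \<mu>\<bar> > \<epsilon>}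
         \<le> 2 * exp (- (concentration_const * \<epsilon>\<^sup>2 / (1 + \<mu> + \<epsilon>)) * x)"
    (is "measure _ ?E \<le> 2 * ?bound")
proof (cases "2 * K \<le> \<epsilon> * x * q")
  case large: True
  interpret prob_space "cookie_space p"
    by (rule prob_space_cookie_space)
  define above where
    "above = {\<omega> \<in> space (cookie_space p). enat (nat \<lfloor>(\<mu> + \<epsilon>) * x\<rfloor>) < U \<omega> x}"
  define below where
    "below = {\<omega> \<in> space (cookie_space p). \<epsilon> < \<mu> \<and> U \<omega> x \<le> enat (nat \<lfloor>(\<mu> - \<epsilon>) * x\<rfloor>)}"
  have "?E \<subseteq> above \<union> below"
    using enat_deviation_cases[of x \<mu> \<epsilon>] assms mu_nonneg by (auto simp: above_def below_def)
  moreover have "above \<in> events" "below \<in> events"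
    unfolding above_def below_def by (cases "\<epsilon> < \<mu>") simp_all
  ultimately have "prob ?E \<le> prob above + prob below"
    by (meson finite_measure_mono measure_Un_le order_trans sets.Un)
  also have "\<dots> \<le> ?bound + ?bound"
  proof (intro add_mono)
    show "prob above \<le> ?bound"
      unfolding above_def by (rule measure_U_above_mean[OF assms large])
    show "prob below \<le> ?bound"
    proof (cases "\<epsilon> < \<mu>")
      case True
      then show ?thesis
        unfolding below_def using measure_U_below_mean[OF assms True large] by simp
    qed (simp add: below_def)
  qed
  finally show ?thesis
    by simp
next
  case False
  have "measure (cookie_space p) ?E \<le> 1"
    by (rule prob_space.prob_le_1[OF prob_space_cookie_space])
  then show ?thesis
    using concentration_bound_trivial[OF assms(2) False[unfolded not_le]] by linarith
qed

end

theorem proposition2p1: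
  fixes p :: "nat \<Rightarrow> real" and pb K :: real
  assumes p_range: "\<And>i. i \<ge> 1 \<Longrightarrow> 0 \<le> p i \<and> p i \<le> 1"
    and lim: "pbar p \<longlonglongrightarrow> pb"
    and pb_range: "0 < pb" "pb < 1"
    and rate: "\<And>n. n \<ge> 1 \<Longrightarrow> \<bar>pbar p n - pb\<bar> \<le> K / real n"
  shows "\<exists>c>0. \<forall>x::nat. x \<ge> 1 \<longrightarrow> (\<forall>\<epsilon>::real. \<epsilon> > 0 \<longrightarrow>
           measure (cookie_space p)
             {\<omega> \<in> space (cookie_space p).
                U \<omega> x = \<infinity> \<or>
                \<bar>real (the_enat (U \<omega> x)) / real x - pb / (1 - pb)\<bar> > \<epsilon>}
           \<le> 2 * exp (- (c * \<epsilon>\<^sup>2 / (1 + pb / (1 - pb) + \<epsilon>)) * real x))"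
proof -
  interpret cookie_environment_rate p pb K
    using p_range pb_range rate by unfold_locales
  show ?thesis
    using concentration_const_pos U_concentration by blast
qed

end
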